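(* Let $S$ be a semigroup and $m\ge1$ such that $S^m$ is a rectangular band. Then: (1) if $m=1$, $S$ is abelian; (2) $S$ is $(\lceil\log_2 m\rceil+1)$-solvable, and $\lceil\log_2 m\rceil$-solvable if $S^m$ is trivial (a single element); (3) $S$ is left $2m$-nilpotent, right $2m$-nilpotent and $2m$-supernilpotent, and in case $S^m$ is trivial it is left and right $m$-nilpotent and $m$-supernilpotent.
   Context: $S^m=\{a_1\cdots a_m: a_i\in S\}$. A rectangular band is a semigroup satisfying $x^2=x$ and $xyz=xz$. For an algebra $\mathbf A$ and congruences $\alpha_1,\dots,\alpha_n$, $M_{\mathbf A}(\alpha_1,\dots,\alpha_n)$ is the subalgebra of $\mathbf A^{\{0,1\}^n}$ generated by all $g$ such that for some $i$ and $(a,b)\in\alpha_i$, $g(x)=a$ if $x_i=0$ and $g(x)=b$ if $x_i=1$; $[\alpha_1,\dots,\alpha_n]$ is the smallest congruence $\delta$ such that for all $f\in M_{\mathbf A}(\alpha_1,\dots,\alpha_n)$: if $(f(x0),f(x1))\in\delta$ for all $x\in\{0,1\}^{n-1}\setminus\{(1,\dots,1)\}$ then $(f(1,\dots,1,0),f(1,\dots,1,1))\in\delta$. With $1$ total, $0$ trivial congruence: $[1]^0=1$, $[1]^{k+1}=[[1]^k,[1]^k]$; $(1]^1=1$, $(1]^{k+1}=[1,(1]^k]$; $[1)^1=1$, $[1)^{k+1}=[[1)^k,1]$. Abelian: $[1,1]=0$; $d$-solvable: $[1]^d=0$; left $d$-nilpotent: $(1]^{d+1}=0$; right $d$-nilpotent: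 $[1)^{d+1}=0$; $d$-supernilpotent: the $(d+1)$-ary $[1,\dots,1]=0$. *)

theory Defs
  imports Complex_Main
begin

fun sprod :: "'a::semigroup_mult list \<Rightarrow> 'a" where
  "sprod [] = undefined"
| "sprod [x] = x"
| "sprod (x # y # ys) = x * sprod (y # ys)"

definition spow :: "nat \<Rightarrow> 'a::semigroup_mult set" where
  "spow m = {sprod xs | xs. length xs = m}"

definition rect_band :: "'a::semigroup_mult set \<Rightarrow> bool" where
  "rect_band T \<longleftrightarrow> (\<forall>x\<in>T. x * x = x) \<and> (\<forall>x\<in>T. \<forall>y\<in>T. \<forall>z\<in>T. x * y * z = x * z)"

definition congruence :: "'a::semigroup_mult rel \<Rightarrow> bool" where
  "congruence \<theta> \<longleftrightarrow> equiv UNIV \<theta> \<and>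
     (\<forall>a b c d. (a, b) \<in> \<theta> \<longrightarrow> (c, d) \<in> \<theta> \<longrightarrow> (a * c, b * d) \<in> \<theta>)"

text \<open>M_A(alpha_1,...,alpha_n): points of {0,1}^n are bool lists of length n
  (True = 1); coordinate i is list index i (0-based). Functions are defined on all
  bool lists but only their values on lists of length n are relevant.\<close>
inductive_set Mset :: "'a::semigroup_mult rel list \<Rightarrow> (bool list \<Rightarrow> 'a) set"
  for \<alpha>s :: "'a rel list" where
  gen: "i < length \<alpha>s \<Longrightarrow> (a, b) \<in> \<alpha>s ! i \<Longrightarrow> (\<lambda>x. if x ! i then b else a) \<in> Mset \<alpha>s"
| mult: "f \<in> Mset \<alpha>s \<Longrightarrow> g \<in> Mset \<alpha>s \<Longrightarrow> (\<lambda>x. f x * g x) \<in> Mset \<alpha>s"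

definition term_cond :: "'a::semigroup_mult rel list \<Rightarrow> 'a rel \<Rightarrow> bool" where
  "term_cond \<alpha>s \<delta> \<longleftrightarrow> (\<forall>f \<in> Mset \<alpha>s.
     (\<forall>x. length x = length \<alpha>s - 1 \<and> x \<noteq> replicate (length \<alpha>s - 1) True \<longrightarrow>
          (f (x @ [False]), f (x @ [True])) \<in> \<delta>) \<longrightarrow>
     (f (replicate (length \<alpha>s - 1) True @ [False]),
      f (replicate (length \<alpha>s - 1) True @ [True])) \<in> \<delta>)"

definition comm :: "'a::semigroup_mult rel list \<Rightarrow> 'a rel" where
  "comm \<alpha>s = \<Inter> {\<delta>. congruence \<delta> \<and> term_cond \<alpha>s \<delta>}"

fun derived :: "nat \<Rightarrow> 'a::semigroup_mult rel" where
  "derived 0 = UNIV"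
| "derived (Suc k) = comm [derived k, derived k]"

text \<open>lseries k = (1]^k and rseries k = [1)^k for k \<ge> 1 (index 0 unused, set to UNIV).\<close>
fun lseries :: "nat \<Rightarrow> 'a::semigroup_mult rel" where
  "lseries 0 = UNIV"
| "lseries (Suc 0) = UNIV"
| "lseries (Suc (Suc k)) = comm [UNIV, lseries (Suc k)]"

fun rseries :: "nat \<Rightarrow> 'a::semigroup_mult rel" where
  "rseries 0 = UNIV"
| "rseries (Suc 0) = UNIV"
| "rseries (Suc (Suc k)) = comm [rseries (Suc k), UNIV]"

definition abelian :: "'a::semigroup_mult itself \<Rightarrow> bool" where
  "abelian _ \<longleftrightarrow> comm [UNIV, UNIV :: 'a rel] = Id"

definition solvable :: "'a::semigroup_mult itself \<Rightarrow> nat \<Rightarrow> bool" where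
  "solvable _ d \<longleftrightarrow> (derived d :: 'a rel) = Id"

definition left_nilpotent :: "'a::semigroup_mult itself \<Rightarrow> nat \<Rightarrow> bool" where
  "left_nilpotent _ d \<longleftrightarrow> (lseries (d + 1) :: 'a rel) = Id"

definition right_nilpotent :: "'a::semigroup_mult itself \<Rightarrow> nat \<Rightarrow> bool" where
  "right_nilpotent _ d \<longleftrightarrow> (rseries (d + 1) :: 'a rel) = Id"

definition supernilpotent :: "'a::semigroup_mult itself \<Rightarrow> nat \<Rightarrow> bool" where
  "supernilpotent _ d \<longleftrightarrow> comm (replicate (d + 1) (UNIV :: 'a rel)) = Id"

end

theory Submission
  imports Defs "HOL-Library.Log_Nat"
begin

text \<open>
  Let T = S^m. It is an ideal of S and a rectangular band, so x c z = x z whenever x and z lie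
  in T. Every element of M(alpha_1, ..., alpha_n) is a product of generators, each depending on a
  single coordinate.

  If alpha <= Rees(S^p) and beta <= Rees(S^q), then [alpha, beta] <= Rees(S^(p+q)): a product of
  generators in which both coordinates occur non-trivially lies in S^(p+q) at every point. Hence
  [1]^k <= Rees(S^(2^k)) and (1]^k, [1)^k <= Rees(S^k). If S^m is trivial, Rees(S^m) = 0, and
  this already gives the sharper bounds.

  In general, let a ~k b (the congruence sandwich k) mean that a = b, or that a, b lie in T and
  u a t = u b t, t a u = t b u for all t in T and all products u of at least k factors. Then ~0
  is trivial and Rees(T) <= ~m. Cutting a product of generators at its first (for t a u: last)
  non-constant factor from T, everything beyond the cut is absorbed by t, and a nonempty part
  before the cut lengthens u by one factor. This shows [alpha, beta] <= ~k as soon as alpha or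
  beta is below ~(k+1), and [alpha, beta] = 0 if alpha and beta are below Rees(T) (for m = 1,
  Rees(T) = 1). Each step of the series thus lowers the index of ~ by one, so
  (1]^(2m+1) = [1)^(2m+1) = 0, and [1]^(k+1) = 0 once 2^k >= m.

  Finally, deleting the middle factor of a product of at least 2m+1 factors does not change it.
  Hence every element of M(1, ..., 1) with 2m+1 coordinates agrees with a product of at most 2m
  generators, so it ignores some coordinate, which forces the term condition for 0.
\<close>

section \<open>Products and powers\<close>

lemma sprod_Cons: "sprod (x # xs) = (if xs = [] then x else x * sprod xs)"
  by (cases xs) auto

lemma sprod_append: "xs \<noteq> [] \<Longrightarrow> ys \<noteq> [] \<Longrightarrow> sprod (xs @ ys) = sprod xs * sprod ys"
  by (induction xs) (auto simp: sprod_Cons mult.assoc)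

lemma sprod_snoc: "sprod (xs @ [x]) = (if xs = [] then x else sprod xs * x)"
  using sprod_append[of xs "[x]"] by auto

lemma sprod_flatten: "ys \<noteq> [] \<Longrightarrow> sprod (xs @ sprod ys # zs) = sprod (xs @ ys @ zs)"
  by (cases "xs = []"; cases "zs = []") (auto simp: sprod_append sprod_Cons mult.assoc)

lemma sprod_snoc_mult: "sprod (xs @ [x * y]) = sprod (xs @ [x]) * y"
  by (simp add: sprod_snoc mult.assoc)

lemma sprod_Cons_mult: "sprod (x * y # xs) = x * sprod (y # xs)"
  by (simp add: sprod_Cons mult.assoc)

lemma spow_Suc_0 [simp]: "spow (Suc 0) = UNIV"
  unfolding spow_def by (auto intro!: exI[of _ "[x]" for x])

lemma sprod_in_spow:
  assumes "1 \<le> k" "k \<le> length xs"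
  shows "sprod xs \<in> spow k"
proof -
  define n where "n = Suc (length xs - k)"
  have "take n xs \<noteq> []"
    using assms by (auto simp: n_def)
  then have "sprod xs = sprod (sprod (take n xs) # drop n xs)"
    using sprod_flatten[of "take n xs" "[]" "drop n xs"] by simp
  moreover have "length (sprod (take n xs) # drop n xs) = k"
    using assms by (simp add: n_def)
  ultimately show ?thesis
    unfolding spow_def by blast
qed

lemma spow_antimono: "1 \<le> k \<Longrightarrow> k \<le> l \<Longrightarrow> spow l \<subseteq> spow k"
  using sprod_in_spow by (auto simp: spow_def)

lemma spow_obtain:
  assumes "a \<in> spow k" "1 \<le> k"
  obtains xs where "xs \<noteq> []" "length xs = k" "a = sprod xs"
proof -
  obtain xs where "length xs = k" "a = sprod xs"
    using assms(1) unfolding spow_def by blast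
  moreover have "xs \<noteq> []"
    using assms(2) \<open>length xs = k\<close> by auto
  ultimately show thesis
    using that by blast
qed

lemma sprod_in_spow_if_mem:
  assumes "1 \<le> k" "a \<in> set xs" "a \<in> spow k"
  shows "sprod xs \<in> spow k"
proof -
  obtain ys zs where xs: "xs = ys @ a # zs"
    using assms(2) by (meson split_list)
  obtain as where as: "as \<noteq> []" "length as = k" "a = sprod as"
    using assms(1,3) spow_obtain by blast
  have "sprod xs = sprod (ys @ as @ zs)"
    using sprod_flatten[OF as(1)] xs as(3) by simp
  then show ?thesis
    using sprod_in_spow[OF assms(1), of "ys @ as @ zs"] as(2) by simp
qed

lemma spow_mult_right: "1 \<le> k \<Longrightarrow> a \<in> spow k \<Longrightarrow> a * c \<in> spow k"
  using sprod_in_spow_if_mem[of k a "[a, c]"] by simp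

lemma spow_mult_left: "1 \<le> k \<Longrightarrow> a \<in> spow k \<Longrightarrow> c * a \<in> spow k"
  using sprod_in_spow_if_mem[of k a "[c, a]"] by simp

lemma mult_in_spow_add:
  assumes "1 \<le> p" "1 \<le> q" "a \<in> spow p" "b \<in> spow q"
  shows "a * b \<in> spow (p + q)"
proof -
  obtain as bs where "as \<noteq> []" "length as = p" "a = sprod as"
    and "bs \<noteq> []" "length bs = q" "b = sprod bs"
    using assms spow_obtain by metis
  then show ?thesis
    using sprod_in_spow[of "p + q" "as @ bs"] assms(1) by (simp add: sprod_append)
qed

lemma sprod_append_in_spow_add:
  assumes "1 \<le> p" "1 \<le> q" "a \<in> set xs" "a \<in> spow p" "b \<in> set ys" "b \<in> spow q"
  shows "sprod (xs @ ys) \<in> spow (p + q)"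
proof -
  have "xs \<noteq> []" "ys \<noteq> []"
    using assms(3,5) by auto
  then show ?thesis
    using assms sprod_in_spow_if_mem[of p a xs] sprod_in_spow_if_mem[of q b ys]
    by (simp add: sprod_append mult_in_spow_add)
qed

section \<open>Congruences and generators of M(alpha_1, ..., alpha_n)\<close>

lemma congruence_Id: "congruence (Id :: 'a::semigroup_mult rel)"
  unfolding congruence_def by (auto simp: equiv_def refl_on_def sym_def trans_def)

lemma congruence_Int: "congruence \<theta> \<Longrightarrow> congruence \<eta> \<Longrightarrow> congruence (\<theta> \<inter> \<eta>)"
  unfolding congruence_def equiv_def by (simp add: refl_on_def sym_Int trans_Int)

lemma congruence_refl: "congruence \<theta> \<Longrightarrow> (a, a) \<in> \<theta>"
  unfolding congruence_def equiv_def refl_on_def by blast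

lemma congruence_sym: "congruence \<theta> \<Longrightarrow> (a, b) \<in> \<theta> \<Longrightarrow> (b, a) \<in> \<theta>"
  unfolding congruence_def equiv_def sym_def by blast

lemma congruence_trans: "congruence \<theta> \<Longrightarrow> (a, b) \<in> \<theta> \<Longrightarrow> (b, c) \<in> \<theta> \<Longrightarrow> (a, c) \<in> \<theta>"
  unfolding congruence_def equiv_def trans_def by blast

lemma congruence_square:
  assumes "congruence \<theta>" "(a, b) \<in> \<theta>" "(c, a) \<in> \<theta>" "(d, b) \<in> \<theta>"
  shows "(c, d) \<in> \<theta>"
  using assms congruence_sym congruence_trans by meson

lemma comm_least: "congruence \<delta> \<Longrightarrow> term_cond \<alpha>s \<delta> \<Longrightarrow> comm \<alpha>s \<subseteq> \<delta>"
  unfolding comm_def by blast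

lemma Id_subset_comm: "Id \<subseteq> comm \<alpha>s"
  unfolding comm_def congruence_def equiv_def refl_on_def by blast

lemma comm_eq_Id: "term_cond \<alpha>s Id \<Longrightarrow> comm \<alpha>s = Id"
  using comm_least[OF congruence_Id] Id_subset_comm by blast

(* The generator of M(alpha_1, ..., alpha_n) given by coordinate i and (a, b) in alpha_i is
   encoded as the triple (i, a, b). *)
fun gen_val :: "bool list \<Rightarrow> nat \<times> 'a \<times> 'a \<Rightarrow> 'a" where
  "gen_val x (i, a, b) = (if x ! i then b else a)"

fun active_at :: "nat \<Rightarrow> nat \<times> 'a \<times> 'a \<Rightarrow> bool" where
  "active_at j (i, a, b) \<longleftrightarrow> i = j \<and> a \<noteq> b"

definition gen_prod :: "(nat \<times> 'a \<times> 'a) list \<Rightarrow> bool list \<Rightarrow> 'a::semigroup_mult" where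
  "gen_prod gs x = sprod (map (gen_val x) gs)"

definition gen_list :: "'a rel list \<Rightarrow> (nat \<times> 'a \<times> 'a) list \<Rightarrow> bool" where
  "gen_list \<alpha>s gs \<longleftrightarrow> (\<forall>(i, a, b) \<in> set gs. i < length \<alpha>s \<and> (a, b) \<in> \<alpha>s ! i)"

lemma Mset_gen_prodE:
  assumes "f \<in> Mset \<alpha>s"
  obtains gs where "gs \<noteq> []" "gen_list \<alpha>s gs" "f = gen_prod gs"
proof -
  from assms have "\<exists>gs. gs \<noteq> [] \<and> gen_list \<alpha>s gs \<and> f = gen_prod gs"
  proof (induction rule: Mset.induct)
    case (gen i a b)
    then show ?case
      by (intro exI[of _ "[(i, a, b)]"]) (auto simp: gen_list_def gen_prod_def)
  next
    case (mult f g)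
    then obtain gs hs where "gs \<noteq> []" "gen_list \<alpha>s gs" "f = gen_prod gs"
      and "hs \<noteq> []" "gen_list \<alpha>s hs" "g = gen_prod hs"
      by blast
    then show ?case
      by (intro exI[of _ "gs @ hs"]) (auto simp: gen_list_def gen_prod_def sprod_append)
  qed
  with that show thesis
    by blast
qed

lemma gen_list_active_at_less:
  "gen_list \<alpha>s gs \<Longrightarrow> g \<in> set gs \<Longrightarrow> active_at j g \<Longrightarrow> j < length \<alpha>s"
  by (cases g) (auto simp: gen_list_def)

lemma map_gen_val_cong:
  assumes "\<And>g j. g \<in> set gs \<Longrightarrow> active_at j g \<Longrightarrow> x ! j = x' ! j"
  shows "map (gen_val x) gs = map (gen_val x') gs"
proof (rule map_cong[OF refl])
  fix g
  assume "g \<in> set gs"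
  with assms show "gen_val x g = gen_val x' g"
    by (cases g) fastforce
qed

lemma gen_prod_cong:
  assumes "gen_list \<alpha>s gs"
    and "\<And>j. j < length \<alpha>s \<Longrightarrow> x ! j \<noteq> x' ! j \<Longrightarrow> \<not> (\<exists>g\<in>set gs. active_at j g)"
  shows "gen_prod gs x = gen_prod gs x'"
  unfolding gen_prod_def
proof (rule arg_cong[where f = sprod], rule map_gen_val_cong)
  fix g j
  assume "g \<in> set gs" "active_at j g"
  with assms show "x ! j = x' ! j"
    using gen_list_active_at_less by blast
qed

lemma first_active_split:
  assumes "gen_list \<alpha>s gs" "\<exists>g\<in>set gs. \<exists>j\<in>J. active_at j g"
  obtains pre j a b post where "gs = pre @ (j, a, b) # post" "j \<in> J" "a \<noteq> b" "(a, b) \<in> \<alpha>s ! j"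
    "\<forall>x x'. (\<forall>i < length \<alpha>s. i \<notin> J \<longrightarrow> x ! i = x' ! i) \<longrightarrow>
       map (gen_val x) pre = map (gen_val x') pre"
proof -
  obtain pre g post where split: "gs = pre @ g # post" "\<exists>j\<in>J. active_at j g"
    and pre: "\<forall>h\<in>set pre. \<not> (\<exists>j\<in>J. active_at j h)"
    using split_list_first_prop[OF assms(2)] by blast
  obtain j a b where g: "g = (j, a, b)"
    by (cases g)
  have pre_eq: "\<forall>x x'. (\<forall>i < length \<alpha>s. i \<notin> J \<longrightarrow> x ! i = x' ! i) \<longrightarrow>
      map (gen_val x) pre = map (gen_val x') pre"
  proof (intro allI impI map_gen_val_cong)
    fix x x' h i
    assume "\<forall>i < length \<alpha>s. i \<notin> J \<longrightarrow> x ! i = x' ! i" "h \<in> set pre" "active_at i h"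
    with pre split(1) gen_list_active_at_less[OF assms(1), of h i] show "x ! i = x' ! i"
      by auto
  qed
  have "(a, b) \<in> \<alpha>s ! j"
    using assms(1) split(1) g by (auto simp: gen_list_def)
  moreover have "j \<in> J" "a \<noteq> b"
    using split(2) g by auto
  ultimately show thesis
    using that[OF split(1)[unfolded g]] pre_eq by blast
qed

lemma last_active_split:
  assumes "gen_list \<alpha>s gs" "\<exists>g\<in>set gs. \<exists>j\<in>J. active_at j g"
  obtains pre j a b post where "gs = pre @ (j, a, b) # post" "j \<in> J" "a \<noteq> b" "(a, b) \<in> \<alpha>s ! j"
    "\<forall>x x'. (\<forall>i < length \<alpha>s. i \<notin> J \<longrightarrow> x ! i = x' ! i) \<longrightarrow>
       map (gen_val x) post = map (gen_val x') post"
proof -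
  obtain pre g post where split: "gs = pre @ g # post" "\<exists>j\<in>J. active_at j g"
    and post: "\<forall>h\<in>set post. \<not> (\<exists>j\<in>J. active_at j h)"
    using split_list_last_prop[OF assms(2)] by blast
  obtain j a b where g: "g = (j, a, b)"
    by (cases g)
  have post_eq: "\<forall>x x'. (\<forall>i < length \<alpha>s. i \<notin> J \<longrightarrow> x ! i = x' ! i) \<longrightarrow>
      map (gen_val x) post = map (gen_val x') post"
  proof (intro allI impI map_gen_val_cong)
    fix x x' h i
    assume "\<forall>i < length \<alpha>s. i \<notin> J \<longrightarrow> x ! i = x' ! i" "h \<in> set post" "active_at i h"
    with post split(1) gen_list_active_at_less[OF assms(1), of h i] show "x ! i = x' ! i"
      by auto
  qed
  have "(a, b) \<in> \<alpha>s ! j"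
    using assms(1) split(1) g by (auto simp: gen_list_def)
  moreover have "j \<in> J" "a \<noteq> b"
    using split(2) g by auto
  ultimately show thesis
    using that[OF split(1)[unfolded g]] post_eq by blast
qed

lemma term_cond_binaryI:
  assumes "congruence \<delta>"
    and "\<And>gs. gen_list [\<alpha>, \<beta>] gs \<Longrightarrow> \<exists>g\<in>set gs. active_at 0 g \<Longrightarrow> \<exists>g\<in>set gs. active_at 1 g \<Longrightarrow>
      (gen_prod gs [False, False], gen_prod gs [False, True]) \<in> \<delta> \<Longrightarrow>
      (gen_prod gs [True, False], gen_prod gs [True, True]) \<in> \<delta>"
  shows "term_cond [\<alpha>, \<beta>] \<delta>"
  unfolding term_cond_def
proof (intro ballI impI)
  fix f
  assume "f \<in> Mset [\<alpha>, \<beta>]"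
  then obtain gs where gs: "gen_list [\<alpha>, \<beta>] gs" "f = gen_prod gs"
    by (rule Mset_gen_prodE)
  assume "\<forall>x. length x = length [\<alpha>, \<beta>] - 1 \<and> x \<noteq> replicate (length [\<alpha>, \<beta>] - 1) True \<longrightarrow>
    (f (x @ [False]), f (x @ [True])) \<in> \<delta>"
  from this[rule_format, of "[False]"]
  have H: "(gen_prod gs [False, False], gen_prod gs [False, True]) \<in> \<delta>"
    using gs(2) by simp
  have "(gen_prod gs [True, False], gen_prod gs [True, True]) \<in> \<delta>"
  proof (cases "\<exists>g\<in>set gs. active_at 1 g")
    case False
    then have "gen_prod gs [True, False] = gen_prod gs [True, True]"
      by (intro gen_prod_cong[OF gs(1)]) (auto simp: less_Suc_eq)
    then show ?thesis
      using congruence_refl[OF assms(1)] by simp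
  next
    case active_1: True
    show ?thesis
    proof (cases "\<exists>g\<in>set gs. active_at 0 g")
      case False
      then have "gen_prod gs [True, y] = gen_prod gs [False, y]" for y
        by (intro gen_prod_cong[OF gs(1)]) (auto simp: less_Suc_eq)
      then show ?thesis
        using H by simp
    qed (rule assms(2)[OF gs(1) _ active_1 H])
  qed
  then show "(f (replicate (length [\<alpha>, \<beta>] - 1) True @ [False]),
      f (replicate (length [\<alpha>, \<beta>] - 1) True @ [True])) \<in> \<delta>"
    using gs(2) by simp
qed

section \<open>Rees congruences of powers\<close>

definition rees_cong :: "'a set \<Rightarrow> 'a rel" where
  "rees_cong I = {(a, b). a = b \<or> a \<in> I \<and> b \<in> I}"

lemma rees_cong_mono: "I \<subseteq> J \<Longrightarrow> rees_cong I \<subseteq> rees_cong J"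
  unfolding rees_cong_def by auto

lemma rees_cong_singleton: "rees_cong {a} = Id"
  unfolding rees_cong_def by auto

lemma rees_cong_UNIV [simp]: "rees_cong UNIV = UNIV"
  unfolding rees_cong_def by auto

lemma congruence_rees_cong_spow: "1 \<le> k \<Longrightarrow> congruence (rees_cong (spow k))"
  unfolding congruence_def rees_cong_def
  by (auto simp: equiv_def refl_on_def sym_def trans_def spow_mult_left spow_mult_right)

lemma split_list_two:
  assumes "x \<in> set zs" "y \<in> set zs" "x \<noteq> y"
  obtains xs ys where "zs = xs @ ys" "x \<in> set xs \<and> y \<in> set ys \<or> y \<in> set xs \<and> x \<in> set ys"
proof -
  obtain us vs where zs: "zs = us @ x # vs"
    using assms(1) by (meson split_list)
  show thesis
  proof (cases "y \<in> set us")
    case True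
    then show thesis
      using that[of us "x # vs"] zs by simp
  next
    case False
    then show thesis
      using that[of "us @ [x]" vs] zs assms(2,3) by simp
  qed
qed

lemma term_cond_rees_cong_spow:
  assumes "1 \<le> p" "1 \<le> q" "\<alpha> \<subseteq> rees_cong (spow p)" "\<beta> \<subseteq> rees_cong (spow q)"
  shows "term_cond [\<alpha>, \<beta>] (rees_cong (spow (p + q)))"
proof (rule term_cond_binaryI)
  show "congruence (rees_cong (spow (p + q)))"
    using assms(1) by (simp add: congruence_rees_cong_spow)
  fix gs
  assume gs: "gen_list [\<alpha>, \<beta>] gs" and "\<exists>g\<in>set gs. active_at 0 g" "\<exists>g\<in>set gs. active_at 1 g"
  then obtain a b c d where g0: "(0, a, b) \<in> set gs" "a \<noteq> b" and g1: "(1, c, d) \<in> set gs" "c \<noteq> d"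
    by (metis active_at.elims(2))
  have "(a, b) \<in> \<alpha>" "(c, d) \<in> \<beta>"
    using gs g0 g1 by (auto simp: gen_list_def)
  then have ab: "a \<in> spow p" "b \<in> spow p" and cd: "c \<in> spow q" "d \<in> spow q"
    using assms(3,4) g0(2) g1(2) by (auto simp: rees_cong_def)
  obtain xs ys where gs_eq: "gs = xs @ ys"
    and pos: "(0, a, b) \<in> set xs \<and> (1, c, d) \<in> set ys \<or> (1, c, d) \<in> set xs \<and> (0, a, b) \<in> set ys"
    using split_list_two[OF g0(1) g1(1)] by auto
  have "gen_prod gs z \<in> spow (p + q)" for z
    using pos
  proof
    assume "(0, a, b) \<in> set xs \<and> (1, c, d) \<in> set ys"
    then have mem: "gen_val z (0, a, b) \<in> set (map (gen_val z) xs)"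
        "gen_val z (1, c, d) \<in> set (map (gen_val z) ys)"
      by (auto simp del: gen_val.simps)
    show ?thesis
      unfolding gen_prod_def gs_eq map_append
      by (rule sprod_append_in_spow_add[OF assms(1,2) mem(1) _ mem(2)]) (simp_all add: ab cd)
  next
    assume "(1, c, d) \<in> set xs \<and> (0, a, b) \<in> set ys"
    then have mem: "gen_val z (1, c, d) \<in> set (map (gen_val z) xs)"
        "gen_val z (0, a, b) \<in> set (map (gen_val z) ys)"
      by (auto simp del: gen_val.simps)
    show ?thesis
      unfolding gen_prod_def gs_eq map_append add.commute[of p]
      by (rule sprod_append_in_spow_add[OF assms(2,1) mem(1) _ mem(2)]) (simp_all add: ab cd)
  qed
  then show "(gen_prod gs [True, False], gen_prod gs [True, True]) \<in> rees_cong (spow (p + q))"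
    by (simp add: rees_cong_def)
qed

lemma comm_subset_rees_cong_spow:
  "1 \<le> p \<Longrightarrow> 1 \<le> q \<Longrightarrow> \<alpha> \<subseteq> rees_cong (spow p) \<Longrightarrow> \<beta> \<subseteq> rees_cong (spow q) \<Longrightarrow>
    comm [\<alpha>, \<beta>] \<subseteq> rees_cong (spow (p + q))"
  by (simp add: comm_least congruence_rees_cong_spow term_cond_rees_cong_spow)

lemma Id_subset_derived: "Id \<subseteq> derived k"
  by (cases k) (auto simp: Id_subset_comm[THEN subsetD])

lemma Id_subset_lseries: "Id \<subseteq> lseries k"
  by (cases k rule: lseries.cases) (auto simp: Id_subset_comm[THEN subsetD])

lemma Id_subset_rseries: "Id \<subseteq> rseries k"
  by (cases k rule: rseries.cases) (auto simp: Id_subset_comm[THEN subsetD])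

lemma lseries_Suc: "1 \<le> k \<Longrightarrow> lseries (Suc k) = comm [UNIV, lseries k]"
  by (cases k) auto

lemma rseries_Suc: "1 \<le> k \<Longrightarrow> rseries (Suc k) = comm [rseries k, UNIV]"
  by (cases k) auto

lemma derived_subset_rees_cong: "derived k \<subseteq> rees_cong (spow (2 ^ k))"
proof (induction k)
  case 0
  show ?case
    by simp
next
  case (Suc k)
  then show ?case
    using comm_subset_rees_cong_spow[of "2 ^ k" "2 ^ k"] by (simp add: mult_2)
qed

lemma lseries_subset_rees_cong: "1 \<le> k \<Longrightarrow> lseries k \<subseteq> rees_cong (spow k)"
proof (induction k rule: nat_induct_at_least)
  case base
  show ?case
    by simp
next
  case (Suc k)
  then show ?case
    using comm_subset_rees_cong_spow[of 1 k UNIV] by (simp add: lseries_Suc)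
qed

lemma rseries_subset_rees_cong: "1 \<le> k \<Longrightarrow> rseries k \<subseteq> rees_cong (spow k)"
proof (induction k rule: nat_induct_at_least)
  case base
  show ?case
    by simp
next
  case (Suc k)
  then show ?case
    using comm_subset_rees_cong_spow[of k 1 _ UNIV] by (simp add: rseries_Suc)
qed

lemma le_two_power_ceiling_log: "1 \<le> m \<Longrightarrow> m \<le> 2 ^ nat \<lceil>log 2 (real m)\<rceil>"
  using ceillog2_le_iff[of m "ceillog2 m"] by (simp add: ceillog2_def)

section \<open>Supernilpotence from deletable factors\<close>

lemma gen_prod_list_update:
  assumes "i \<notin> fst ` set gs"
  shows "gen_prod gs (x[i := v]) = gen_prod gs x"
  unfolding gen_prod_def
proof (rule arg_cong[where f = sprod], rule map_gen_val_cong)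
  fix g j
  assume "g \<in> set gs" "active_at j g"
  moreover from \<open>active_at j g\<close> have "fst g = j"
    by (cases g) simp
  ultimately have "j \<noteq> i"
    using assms by force
  then show "x[i := v] ! j = x ! j"
    by simp
qed

lemma term_cond_Id_if_coordinate_free:
  assumes "\<And>f. f \<in> Mset \<alpha>s \<Longrightarrow> \<exists>i < length \<alpha>s. \<forall>x. f (x[i := False]) = f (x[i := True])"
  shows "term_cond \<alpha>s Id"
  unfolding term_cond_def
proof (intro ballI impI)
  fix f
  assume "f \<in> Mset \<alpha>s"
  then obtain i where i: "i < length \<alpha>s" and free: "\<And>x. f (x[i := False]) = f (x[i := True])"
    using assms by blast
  define r where "r = replicate (length \<alpha>s - 1) True"
  assume H: "\<forall>x. length x = length \<alpha>s - 1 \<and> x \<noteq> replicate (length \<alpha>s - 1) True \<longrightarrow>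
    (f (x @ [False]), f (x @ [True])) \<in> Id"
  have "f (r @ [False]) = f (r @ [True])"
  proof (cases "i = length \<alpha>s - 1")
    case True
    then show ?thesis
      using free[of "r @ [False]"] by (simp add: r_def list_update_append)
  next
    case False
    with i have i_less: "i < length \<alpha>s - 1"
      by simp
    define y where "y = r[i := False]"
    have "r[i := True] = r"
      using i_less by (simp add: r_def list_update_same_conv)
    then have "f (y @ [v]) = f (r @ [v])" for v
      using free[of "r @ [v]"] i_less by (simp add: y_def r_def list_update_append)
    moreover have "f (y @ [False]) = f (y @ [True])"
    proof -
      have "y ! i \<noteq> r ! i"
        using i_less by (simp add: y_def r_def)
      then have "y \<noteq> r"
        by auto
      then show ?thesis
        using H by (simp add: y_def r_def)
    qed
    ultimately show ?thesis
      by simp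
  qed
  then show "(f (replicate (length \<alpha>s - 1) True @ [False]),
      f (replicate (length \<alpha>s - 1) True @ [True])) \<in> Id"
    by (simp add: r_def)
qed

lemma gen_prod_shorten:
  fixes gs :: "(nat \<times> 'a::semigroup_mult \<times> 'a) list"
  assumes "\<And>xs :: 'a list. n \<le> length xs \<Longrightarrow> sprod xs = sprod (take p xs @ drop (Suc p) xs)" "p < n"
  shows "\<exists>hs. length hs < n \<and> gen_prod hs = gen_prod gs"
proof (induction gs rule: length_induct)
  case (1 gs)
  show ?case
  proof (cases "length gs < n")
    case False
    define gs' where "gs' = take p gs @ drop (Suc p) gs"
    have "length gs' < length gs"
      using False assms(2) by (simp add: gs'_def)
    moreover have "gen_prod gs' = gen_prod gs"
    proof
      fix x
      show "gen_prod gs' x = gen_prod gs x"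
        using assms(1)[of "map (gen_val x) gs"] False
        by (simp add: gen_prod_def gs'_def take_map drop_map)
    qed
    ultimately show ?thesis
      using "1.IH" by metis
  qed blast
qed

lemma comm_replicate_UNIV_eq_Id_if_sprod_delete:
  assumes "\<And>xs :: 'a::semigroup_mult list.
      n \<le> length xs \<Longrightarrow> sprod xs = sprod (take p xs @ drop (Suc p) xs)"
    and "p < n"
  shows "comm (replicate n (UNIV :: 'a rel)) = Id"
proof (intro comm_eq_Id term_cond_Id_if_coordinate_free)
  fix f :: "bool list \<Rightarrow> 'a"
  assume "f \<in> Mset (replicate n UNIV)"
  then obtain gs where "f = gen_prod gs"
    by (rule Mset_gen_prodE)
  moreover have "\<exists>hs. length hs < n \<and> gen_prod hs = gen_prod gs"
    by (rule gen_prod_shorten[of n p]) (fact assms)+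
  ultimately obtain hs where hs: "length hs < n" "gen_prod hs = f"
    by metis
  have "card (fst ` set hs) < card {..<n}"
    using card_image_le[of "set hs" fst] card_length[of hs] hs(1) by simp
  then have "\<not> {..<n} \<subseteq> fst ` set hs"
    by (meson card_mono finite_imageI finite_set leD)
  then obtain i where "i < n" "i \<notin> fst ` set hs"
    by blast
  then show "\<exists>i < length (replicate n (UNIV :: 'a rel)). \<forall>x. f (x[i := False]) = f (x[i := True])"
    using hs(2) gen_prod_list_update by (metis length_replicate)
qed

section \<open>Semigroups with trivial m-th power\<close>

context
  fixes m :: nat and a :: "'a::semigroup_mult"
  assumes m_pos: "1 \<le> m" and spow_eq: "spow m = {a}"
begin

lemma rees_cong_spow_subset_Id: "m \<le> k \<Longrightarrow> rees_cong (spow k) \<subseteq> (Id :: 'a rel)"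
  using rees_cong_mono[OF spow_antimono[OF m_pos]] rees_cong_singleton spow_eq by metis

lemma derived_eq_Id_if_spow_singleton: "m \<le> 2 ^ d \<Longrightarrow> derived d = (Id :: 'a rel)"
  using derived_subset_rees_cong rees_cong_spow_subset_Id Id_subset_derived by blast

lemma lseries_eq_Id_if_spow_singleton: "lseries (m + 1) = (Id :: 'a rel)"
  using lseries_subset_rees_cong[of "m + 1"] rees_cong_spow_subset_Id[of "m + 1"] Id_subset_lseries
  by (meson order_trans subset_antisym le_add1 le_add2)

lemma rseries_eq_Id_if_spow_singleton: "rseries (m + 1) = (Id :: 'a rel)"
  using rseries_subset_rees_cong[of "m + 1"] rees_cong_spow_subset_Id[of "m + 1"] Id_subset_rseries
  by (meson order_trans subset_antisym le_add1 le_add2)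

lemma comm_replicate_eq_Id_if_spow_singleton: "comm (replicate (m + 1) (UNIV :: 'a rel)) = Id"
proof (rule comm_replicate_UNIV_eq_Id_if_sprod_delete)
  fix xs :: "'a list"
  assume "m + 1 \<le> length xs"
  then have "sprod xs \<in> spow m" "sprod (take m xs @ drop (Suc m) xs) \<in> spow m"
    using m_pos by (simp_all add: sprod_in_spow)
  then show "sprod xs = sprod (take m xs @ drop (Suc m) xs)"
    using spow_eq by simp
qed simp

end

section \<open>Semigroups whose m-th power is a rectangular band\<close>

locale rect_band_power =
  fixes m :: nat and T :: "'a::semigroup_mult set"
  assumes T_eq: "T = spow m" and m_pos: "1 \<le> m" and rect_band: "rect_band T"
begin

lemma idem: "x \<in> T \<Longrightarrow> x * x = x"
  using rect_band unfolding rect_band_def by blast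

lemma rect: "x \<in> T \<Longrightarrow> y \<in> T \<Longrightarrow> z \<in> T \<Longrightarrow> x * y * z = x * z"
  using rect_band unfolding rect_band_def by blast

lemma mult_right_mem: "x \<in> T \<Longrightarrow> x * c \<in> T"
  using spow_mult_right[OF m_pos] T_eq by blast

lemma mult_left_mem: "x \<in> T \<Longrightarrow> c * x \<in> T"
  using spow_mult_left[OF m_pos] T_eq by blast

lemma sprod_mem: "m \<le> length xs \<Longrightarrow> sprod xs \<in> T"
  using sprod_in_spow[OF m_pos] T_eq by blast

lemma sprod_mem_if_mem: "x \<in> set xs \<Longrightarrow> x \<in> T \<Longrightarrow> sprod xs \<in> T"
  using sprod_in_spow_if_mem[OF m_pos] T_eq by blast

lemma absorb: "x \<in> T \<Longrightarrow> z \<in> T \<Longrightarrow> x * c * z = x * z"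
  using idem rect[of x "x * c" z] mult_right_mem by (metis mult.assoc)

definition left_sandwich :: "nat \<Rightarrow> 'a rel" where
  "left_sandwich k = {(a, b). \<forall>us t. k \<le> length us \<longrightarrow> t \<in> T \<longrightarrow>
     sprod (us @ [a]) * t = sprod (us @ [b]) * t}"

definition right_sandwich :: "nat \<Rightarrow> 'a rel" where
  "right_sandwich k = {(a, b). \<forall>us t. k \<le> length us \<longrightarrow> t \<in> T \<longrightarrow>
     t * sprod (a # us) = t * sprod (b # us)}"

definition sandwich :: "nat \<Rightarrow> 'a rel" where
  "sandwich k = rees_cong T \<inter> left_sandwich k \<inter> right_sandwich k"

lemma left_sandwichD:
  "(a, b) \<in> left_sandwich k \<Longrightarrow> k \<le> length us \<Longrightarrow> t \<in> T \<Longrightarrow>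
    sprod (us @ [a]) * t = sprod (us @ [b]) * t"
  unfolding left_sandwich_def by blast

lemma right_sandwichD:
  "(a, b) \<in> right_sandwich k \<Longrightarrow> k \<le> length us \<Longrightarrow> t \<in> T \<Longrightarrow>
    t * sprod (a # us) = t * sprod (b # us)"
  unfolding right_sandwich_def by blast

lemma congruence_left_sandwich: "congruence (left_sandwich k)"
proof -
  have "(a * c, b * d) \<in> left_sandwich k"
    if ab: "(a, b) \<in> left_sandwich k" and cd: "(c, d) \<in> left_sandwich k" for a b c d
  proof -
    have "sprod (us @ [a * c]) * t = sprod (us @ [b * d]) * t" if "k \<le> length us" "t \<in> T" for us t
    proof -
      have "sprod (us @ [a * c]) * t = sprod (us @ [a]) * (c * t)"
        by (simp add: sprod_snoc_mult mult.assoc)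
      also have "\<dots> = sprod (us @ [b]) * (c * t)"
        using left_sandwichD[OF ab] that mult_left_mem by simp
      also have "\<dots> = sprod ((us @ [b]) @ [c]) * t"
        by (simp only: sprod_snoc[of "us @ [b]"]) (simp add: mult.assoc)
      also have "\<dots> = sprod ((us @ [b]) @ [d]) * t"
        using left_sandwichD[OF cd, of "us @ [b]"] that by simp
      also have "\<dots> = sprod (us @ [b * d]) * t"
        by (simp only: sprod_snoc[of "us @ [b]"] sprod_snoc_mult) simp
      finally show ?thesis .
    qed
    then show ?thesis
      by (simp add: left_sandwich_def)
  qed
  then show ?thesis
    unfolding congruence_def equiv_def refl_on_def sym_def trans_def left_sandwich_def by auto
qed

lemma congruence_right_sandwich: "congruence (right_sandwich k)"
proof -
  have "(a * c, b * d) \<in> right_sandwich k"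
    if ab: "(a, b) \<in> right_sandwich k" and cd: "(c, d) \<in> right_sandwich k" for a b c d
  proof -
    have "t * sprod (a * c # us) = t * sprod (b * d # us)" if "k \<le> length us" "t \<in> T" for us t
    proof -
      have "t * sprod (a * c # us) = (t * a) * sprod (c # us)"
        by (simp add: sprod_Cons_mult mult.assoc)
      also have "\<dots> = (t * a) * sprod (d # us)"
        using right_sandwichD[OF cd] that mult_right_mem by simp
      also have "\<dots> = t * sprod (a # d # us)"
        by (simp add: mult.assoc)
      also have "\<dots> = t * sprod (b # d # us)"
        using right_sandwichD[OF ab, of "d # us"] that by (simp del: sprod.simps)
      also have "\<dots> = t * sprod (b * d # us)"
        by (simp add: sprod_Cons_mult)
      finally show ?thesis .
    qed
    then show ?thesis
      by (simp add: right_sandwich_def)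
  qed
  then show ?thesis
    unfolding congruence_def equiv_def refl_on_def sym_def trans_def right_sandwich_def by auto
qed

lemma congruence_rees_cong: "congruence (rees_cong T)"
  using congruence_rees_cong_spow[OF m_pos] T_eq by simp

lemma congruence_sandwich: "congruence (sandwich k)"
  unfolding sandwich_def
  by (intro congruence_Int congruence_rees_cong congruence_left_sandwich congruence_right_sandwich)

lemma left_sandwich_mono: "k \<le> l \<Longrightarrow> left_sandwich k \<subseteq> left_sandwich l"
  unfolding left_sandwich_def by force

lemma right_sandwich_mono: "k \<le> l \<Longrightarrow> right_sandwich k \<subseteq> right_sandwich l"
  unfolding right_sandwich_def by force

lemma sandwich_mono: "k \<le> l \<Longrightarrow> sandwich k \<subseteq> sandwich l"
  unfolding sandwich_def using left_sandwich_mono right_sandwich_mono by blast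

lemma sandwich_0: "sandwich 0 = Id"
proof
  show "Id \<subseteq> sandwich 0"
    using congruence_sandwich congruence_refl by blast
  show "sandwich 0 \<subseteq> Id"
  proof clarify
    fix a b
    assume ab: "(a, b) \<in> sandwich 0"
    show "a = b"
    proof (rule ccontr)
      assume "a \<noteq> b"
      with ab have T: "a \<in> T" "b \<in> T"
        by (auto simp: sandwich_def rees_cong_def)
      have "a * t = b * t" "t * a = t * b" if "t \<in> T" for t
        using ab left_sandwichD[of a b 0 "[]" t] right_sandwichD[of a b 0 "[]" t] that
        by (simp_all add: sandwich_def)
      then have "a = b"
        using T idem by metis
      with \<open>a \<noteq> b\<close> show False ..
    qed
  qed
qed

lemma rees_cong_subset_sandwich: "rees_cong T \<subseteq> sandwich m"
proof -
  have "sprod (us @ [a]) * t = sprod us * t" "t * sprod (a # us) = t * sprod us"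
    if "a \<in> T" "m \<le> length us" "t \<in> T" for a us t
  proof -
    have "us \<noteq> []" "sprod us \<in> T"
      using that m_pos sprod_mem by auto
    then show "sprod (us @ [a]) * t = sprod us * t" "t * sprod (a # us) = t * sprod us"
      using rect that by (simp_all add: sprod_snoc sprod_Cons mult.assoc)
  qed
  then show ?thesis
    unfolding sandwich_def left_sandwich_def right_sandwich_def rees_cong_def by auto
qed

lemma left_sandwich_append_absorb:
  assumes "ys \<noteq> []" "sprod ys \<in> T"
  shows "(sprod (ys @ zs), sprod ys) \<in> left_sandwich k"
proof (cases "zs = []")
  case False
  have "sprod (us @ [sprod ys * sprod zs]) * t = sprod (us @ [sprod ys]) * t" if "t \<in> T" for us t
  proof -
    have "sprod (us @ [sprod ys]) \<in> T"
      using sprod_mem_if_mem[of "sprod ys"] assms(2) by simp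
    with absorb that show ?thesis
      by (simp add: sprod_snoc_mult)
  qed
  then show ?thesis
    using assms False by (simp add: left_sandwich_def sprod_append)
qed (simp add: congruence_refl congruence_left_sandwich)

lemma right_sandwich_append_absorb:
  assumes "ys \<noteq> []" "sprod ys \<in> T"
  shows "(sprod (zs @ ys), sprod ys) \<in> right_sandwich k"
proof (cases "zs = []")
  case False
  have "t * sprod (sprod zs * sprod ys # us) = t * sprod (sprod ys # us)" if "t \<in> T" for us t
  proof -
    have "sprod (sprod ys # us) \<in> T"
      using sprod_mem_if_mem[of "sprod ys"] assms(2) by simp
    with absorb that show ?thesis
      by (simp add: sprod_Cons_mult mult.assoc)
  qed
  then show ?thesis
    using assms False by (simp add: right_sandwich_def sprod_append)
qed (simp add: congruence_refl congruence_right_sandwich)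

lemma left_sandwich_prefix:
  assumes "(a, b) \<in> left_sandwich (k + length cs)"
  shows "(sprod (cs @ [a]), sprod (cs @ [b])) \<in> left_sandwich k"
proof -
  have "sprod (us @ [sprod (cs @ [a])]) * t = sprod (us @ [sprod (cs @ [b])]) * t"
    if "k \<le> length us" "t \<in> T" for us t
    using left_sandwichD[OF assms, of "us @ cs" t] that
      sprod_flatten[of "cs @ [a]" us "[]"] sprod_flatten[of "cs @ [b]" us "[]"]
    by simp
  then show ?thesis
    by (simp add: left_sandwich_def)
qed

lemma right_sandwich_suffix:
  assumes "(a, b) \<in> right_sandwich (k + length cs)"
  shows "(sprod (a # cs), sprod (b # cs)) \<in> right_sandwich k"
proof -
  have "t * sprod (sprod (a # cs) # us) = t * sprod (sprod (b # cs) # us)"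
    if "k \<le> length us" "t \<in> T" for us t
    using right_sandwichD[OF assms, of "cs @ us" t] that
      sprod_flatten[of "a # cs" "[]" us] sprod_flatten[of "b # cs" "[]" us]
    by simp
  then show ?thesis
    by (simp add: right_sandwich_def)
qed

lemma left_sandwich_gen_prod:
  assumes gs: "gs = pre @ g # post" and T: "gen_val x g \<in> T" "gen_val x' g \<in> T"
    and pre: "map (gen_val x) pre = map (gen_val x') pre"
    and g: "(gen_val x g, gen_val x' g) \<in> left_sandwich (k + length pre)"
  shows "(gen_prod gs x, gen_prod gs x') \<in> left_sandwich k"
proof -
  have "(gen_prod gs z, sprod (map (gen_val z) pre @ [gen_val z g])) \<in> left_sandwich k"
    if "gen_val z g \<in> T" for z
    using left_sandwich_append_absorb[of "map (gen_val z) pre @ [gen_val z g]"]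
      sprod_mem_if_mem[of "gen_val z g"] that
    by (simp add: gs gen_prod_def)
  moreover have "(sprod (map (gen_val x) pre @ [gen_val x g]),
      sprod (map (gen_val x') pre @ [gen_val x' g])) \<in> left_sandwich k"
    using left_sandwich_prefix[of _ _ k "map (gen_val x') pre"] g by (simp add: pre)
  ultimately show ?thesis
    using T congruence_left_sandwich congruence_sym congruence_trans by meson
qed

lemma right_sandwich_gen_prod:
  assumes gs: "gs = pre @ g # post" and T: "gen_val x g \<in> T" "gen_val x' g \<in> T"
    and post: "map (gen_val x) post = map (gen_val x') post"
    and g: "(gen_val x g, gen_val x' g) \<in> right_sandwich (k + length post)"
  shows "(gen_prod gs x, gen_prod gs x') \<in> right_sandwich k"
proof -
  have "(gen_prod gs z, sprod (gen_val z g # map (gen_val z) post)) \<in> right_sandwich k"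
    if "gen_val z g \<in> T" for z
    using right_sandwich_append_absorb[of "gen_val z g # map (gen_val z) post"]
      sprod_mem_if_mem[of "gen_val z g"] that
    by (simp add: gs gen_prod_def)
  moreover have "(sprod (gen_val x g # map (gen_val x) post),
      sprod (gen_val x' g # map (gen_val x') post)) \<in> right_sandwich k"
    using right_sandwich_suffix[of _ _ k "map (gen_val x') post"] g by (simp add: post)
  ultimately show ?thesis
    using T congruence_right_sandwich congruence_sym congruence_trans by meson
qed

lemma term_cond_left_sandwich_snd:
  assumes "\<beta> \<subseteq> rees_cong T \<inter> left_sandwich (Suc k)"
  shows "term_cond [\<alpha>, \<beta>] (left_sandwich k)"
proof (rule term_cond_binaryI[OF congruence_left_sandwich])
  fix gs
  assume gs: "gen_list [\<alpha>, \<beta>] gs" and "\<exists>g\<in>set gs. active_at 0 g" "\<exists>g\<in>set gs. active_at 1 g"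
    and H: "(gen_prod gs [False, False], gen_prod gs [False, True]) \<in> left_sandwich k"
  then have "\<exists>g\<in>set gs. \<exists>j\<in>{1}. active_at j g"
    by simp
  then obtain pre j a b post
    where split: "gs = pre @ (j, a, b) # post" "j \<in> {1}" "a \<noteq> b" "(a, b) \<in> [\<alpha>, \<beta>] ! j"
    and pre: "\<forall>x x'. (\<forall>i < length [\<alpha>, \<beta>]. i \<notin> {1} \<longrightarrow> x ! i = x' ! i) \<longrightarrow>
      map (gen_val x) pre = map (gen_val x') pre"
    by (rule first_active_split[OF gs])
  then have j: "j = 1" and ab: "a \<in> T" "b \<in> T" "(a, b) \<in> left_sandwich (Suc k)"
    using assms by (auto simp: rees_cong_def)
  show "(gen_prod gs [True, False], gen_prod gs [True, True]) \<in> left_sandwich k"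
  proof (cases "pre = []")
    case True
    have "(gen_prod gs [x, y], gen_prod gs [x', y]) \<in> left_sandwich k" for x x' y
      using ab split(1) by (intro left_sandwich_gen_prod)
        (auto simp: True j congruence_refl congruence_left_sandwich)
    then show ?thesis
      using H by (blast intro: congruence_square[OF congruence_left_sandwich])
  next
    case False
    have "map (gen_val [True, False]) pre = map (gen_val [True, True]) pre"
      by (rule pre[rule_format]) (auto simp: less_Suc_eq)
    moreover have "Suc k \<le> k + length pre"
      using False by (cases pre) auto
    then have "(a, b) \<in> left_sandwich (k + length pre)"
      using ab(3) left_sandwich_mono by blast
    ultimately show ?thesis
      using ab split(1) by (intro left_sandwich_gen_prod) (auto simp: j)
  qed
qed

lemma term_cond_left_sandwich_fst:
  assumes "\<alpha> \<subseteq> rees_cong T \<inter> left_sandwich (Suc k)"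
  shows "term_cond [\<alpha>, \<beta>] (left_sandwich k)"
proof (rule term_cond_binaryI[OF congruence_left_sandwich])
  fix gs
  assume gs: "gen_list [\<alpha>, \<beta>] gs" and "\<exists>g\<in>set gs. active_at 0 g" "\<exists>g\<in>set gs. active_at 1 g"
    and H: "(gen_prod gs [False, False], gen_prod gs [False, True]) \<in> left_sandwich k"
  then have "\<exists>g\<in>set gs. \<exists>j\<in>{0}. active_at j g"
    by simp
  then obtain pre j a b post
    where split: "gs = pre @ (j, a, b) # post" "j \<in> {0}" "a \<noteq> b" "(a, b) \<in> [\<alpha>, \<beta>] ! j"
    and pre: "\<forall>x x'. (\<forall>i < length [\<alpha>, \<beta>]. i \<notin> {0} \<longrightarrow> x ! i = x' ! i) \<longrightarrow>
      map (gen_val x) pre = map (gen_val x') pre"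
    by (rule first_active_split[OF gs])
  then have j: "j = 0" and ab: "a \<in> T" "b \<in> T" "(a, b) \<in> left_sandwich (Suc k)"
    using assms by (auto simp: rees_cong_def)
  show "(gen_prod gs [True, False], gen_prod gs [True, True]) \<in> left_sandwich k"
  proof (cases "pre = []")
    case True
    show ?thesis
      using ab split(1) by (intro left_sandwich_gen_prod)
        (auto simp: True j congruence_refl congruence_left_sandwich)
  next
    case False
    have "map (gen_val [True, y]) pre = map (gen_val [False, y]) pre" for y
      by (rule pre[rule_format]) (auto simp: less_Suc_eq)
    moreover have "Suc k \<le> k + length pre"
      using False by (cases pre) auto
    then have "(b, a) \<in> left_sandwich (k + length pre)"
      using ab(3) left_sandwich_mono congruence_sym[OF congruence_left_sandwich] by blast
    ultimately have "(gen_prod gs [True, y], gen_prod gs [False, y]) \<in> left_sandwich k" for y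
      using ab split(1) by (intro left_sandwich_gen_prod) (auto simp: j)
    then show ?thesis
      using H by (blast intro: congruence_square[OF congruence_left_sandwich])
  qed
qed

lemma term_cond_left_sandwich_0:
  assumes "\<alpha> \<subseteq> rees_cong T" "\<beta> \<subseteq> rees_cong T"
  shows "term_cond [\<alpha>, \<beta>] (left_sandwich 0)"
proof (rule term_cond_binaryI[OF congruence_left_sandwich])
  fix gs
  assume gs: "gen_list [\<alpha>, \<beta>] gs" and "\<exists>g\<in>set gs. active_at 0 g" "\<exists>g\<in>set gs. active_at 1 g"
    and H: "(gen_prod gs [False, False], gen_prod gs [False, True]) \<in> left_sandwich 0"
  then have "\<exists>g\<in>set gs. \<exists>j\<in>{0, 1}. active_at j g"
    by auto
  then obtain pre j a b post where split: "gs = pre @ (j, a, b) # post" "j \<in> {0, 1}" "a \<noteq> b"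
      "(a, b) \<in> [\<alpha>, \<beta>] ! j"
    and pre: "\<forall>x x'. (\<forall>i < length [\<alpha>, \<beta>]. i \<notin> {0, 1} \<longrightarrow> x ! i = x' ! i) \<longrightarrow>
      map (gen_val x) pre = map (gen_val x') pre"
    by (rule first_active_split[OF gs])
  then have ab: "a \<in> T" "b \<in> T"
    using assms by (auto simp: rees_cong_def)
  have pre_eq: "map (gen_val x) pre = map (gen_val x') pre" for x x'
    by (rule pre[rule_format]) (auto simp: less_Suc_eq)
  have step: "(gen_prod gs x, gen_prod gs x') \<in> left_sandwich 0" if "x ! j = x' ! j" for x x'
    using ab split(1) that pre_eq[of x x'] by (intro left_sandwich_gen_prod)
      (auto simp: congruence_refl congruence_left_sandwich)
  show "(gen_prod gs [True, False], gen_prod gs [True, True]) \<in> left_sandwich 0"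
  proof (cases "j = 0")
    case True
    then show ?thesis
      by (intro step) simp
  next
    case False
    with split(2) have "(gen_prod gs [x, y], gen_prod gs [x', y]) \<in> left_sandwich 0" for x x' y
      by (intro step) auto
    then show ?thesis
      using H by (blast intro: congruence_square[OF congruence_left_sandwich])
  qed
qed

lemma term_cond_right_sandwich_snd:
  assumes "\<beta> \<subseteq> rees_cong T \<inter> right_sandwich (Suc k)"
  shows "term_cond [\<alpha>, \<beta>] (right_sandwich k)"
proof (rule term_cond_binaryI[OF congruence_right_sandwich])
  fix gs
  assume gs: "gen_list [\<alpha>, \<beta>] gs" and "\<exists>g\<in>set gs. active_at 0 g" "\<exists>g\<in>set gs. active_at 1 g"
    and H: "(gen_prod gs [False, False], gen_prod gs [False, True]) \<in> right_sandwich k"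
  then have "\<exists>g\<in>set gs. \<exists>j\<in>{1}. active_at j g"
    by simp
  then obtain pre j a b post
    where split: "gs = pre @ (j, a, b) # post" "j \<in> {1}" "a \<noteq> b" "(a, b) \<in> [\<alpha>, \<beta>] ! j"
    and post: "\<forall>x x'. (\<forall>i < length [\<alpha>, \<beta>]. i \<notin> {1} \<longrightarrow> x ! i = x' ! i) \<longrightarrow>
      map (gen_val x) post = map (gen_val x') post"
    by (rule last_active_split[OF gs])
  then have j: "j = 1" and ab: "a \<in> T" "b \<in> T" "(a, b) \<in> right_sandwich (Suc k)"
    using assms by (auto simp: rees_cong_def)
  show "(gen_prod gs [True, False], gen_prod gs [True, True]) \<in> right_sandwich k"
  proof (cases "post = []")
    case True
    have "(gen_prod gs [x, y], gen_prod gs [x', y]) \<in> right_sandwich k" for x x' y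
      using ab split(1) by (intro right_sandwich_gen_prod)
        (auto simp: True j congruence_refl congruence_right_sandwich)
    then show ?thesis
      using H by (blast intro: congruence_square[OF congruence_right_sandwich])
  next
    case False
    have "map (gen_val [True, False]) post = map (gen_val [True, True]) post"
      by (rule post[rule_format]) (auto simp: less_Suc_eq)
    moreover have "Suc k \<le> k + length post"
      using False by (cases post) auto
    then have "(a, b) \<in> right_sandwich (k + length post)"
      using ab(3) right_sandwich_mono by blast
    ultimately show ?thesis
      using ab split(1) by (intro right_sandwich_gen_prod) (auto simp: j)
  qed
qed

lemma term_cond_right_sandwich_fst:
  assumes "\<alpha> \<subseteq> rees_cong T \<inter> right_sandwich (Suc k)"
  shows "term_cond [\<alpha>, \<beta>] (right_sandwich k)"
proof (rule term_cond_binaryI[OF congruence_right_sandwich])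
  fix gs
  assume gs: "gen_list [\<alpha>, \<beta>] gs" and "\<exists>g\<in>set gs. active_at 0 g" "\<exists>g\<in>set gs. active_at 1 g"
    and H: "(gen_prod gs [False, False], gen_prod gs [False, True]) \<in> right_sandwich k"
  then have "\<exists>g\<in>set gs. \<exists>j\<in>{0}. active_at j g"
    by simp
  then obtain pre j a b post
    where split: "gs = pre @ (j, a, b) # post" "j \<in> {0}" "a \<noteq> b" "(a, b) \<in> [\<alpha>, \<beta>] ! j"
    and post: "\<forall>x x'. (\<forall>i < length [\<alpha>, \<beta>]. i \<notin> {0} \<longrightarrow> x ! i = x' ! i) \<longrightarrow>
      map (gen_val x) post = map (gen_val x') post"
    by (rule last_active_split[OF gs])
  then have j: "j = 0" and ab: "a \<in> T" "b \<in> T" "(a, b) \<in> right_sandwich (Suc k)"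
    using assms by (auto simp: rees_cong_def)
  show "(gen_prod gs [True, False], gen_prod gs [True, True]) \<in> right_sandwich k"
  proof (cases "post = []")
    case True
    show ?thesis
      using ab split(1) by (intro right_sandwich_gen_prod)
        (auto simp: True j congruence_refl congruence_right_sandwich)
  next
    case False
    have "map (gen_val [True, y]) post = map (gen_val [False, y]) post" for y
      by (rule post[rule_format]) (auto simp: less_Suc_eq)
    moreover have "Suc k \<le> k + length post"
      using False by (cases post) auto
    then have "(b, a) \<in> right_sandwich (k + length post)"
      using ab(3) right_sandwich_mono congruence_sym[OF congruence_right_sandwich] by blast
    ultimately have "(gen_prod gs [True, y], gen_prod gs [False, y]) \<in> right_sandwich k" for y
      using ab split(1) by (intro right_sandwich_gen_prod) (auto simp: j)
    then show ?thesis
      using H by (blast intro: congruence_square[OF congruence_right_sandwich])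
  qed
qed

lemma term_cond_right_sandwich_0:
  assumes "\<alpha> \<subseteq> rees_cong T" "\<beta> \<subseteq> rees_cong T"
  shows "term_cond [\<alpha>, \<beta>] (right_sandwich 0)"
proof (rule term_cond_binaryI[OF congruence_right_sandwich])
  fix gs
  assume gs: "gen_list [\<alpha>, \<beta>] gs" and "\<exists>g\<in>set gs. active_at 0 g" "\<exists>g\<in>set gs. active_at 1 g"
    and H: "(gen_prod gs [False, False], gen_prod gs [False, True]) \<in> right_sandwich 0"
  then have "\<exists>g\<in>set gs. \<exists>j\<in>{0, 1}. active_at j g"
    by auto
  then obtain pre j a b post where split: "gs = pre @ (j, a, b) # post" "j \<in> {0, 1}" "a \<noteq> b"
      "(a, b) \<in> [\<alpha>, \<beta>] ! j"
    and post: "\<forall>x x'. (\<forall>i < length [\<alpha>, \<beta>]. i \<notin> {0, 1} \<longrightarrow> x ! i = x' ! i) \<longrightarrow>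
      map (gen_val x) post = map (gen_val x') post"
    by (rule last_active_split[OF gs])
  then have ab: "a \<in> T" "b \<in> T"
    using assms by (auto simp: rees_cong_def)
  have post_eq: "map (gen_val x) post = map (gen_val x') post" for x x'
    by (rule post[rule_format]) (auto simp: less_Suc_eq)
  have step: "(gen_prod gs x, gen_prod gs x') \<in> right_sandwich 0" if "x ! j = x' ! j" for x x'
    using ab split(1) that post_eq[of x x'] by (intro right_sandwich_gen_prod)
      (auto simp: congruence_refl congruence_right_sandwich)
  show "(gen_prod gs [True, False], gen_prod gs [True, True]) \<in> right_sandwich 0"
  proof (cases "j = 0")
    case True
    then show ?thesis
      by (intro step) simp
  next
    case False
    with split(2) have "(gen_prod gs [x, y], gen_prod gs [x', y]) \<in> right_sandwich 0" for x x' y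
      by (intro step) auto
    then show ?thesis
      using H by (blast intro: congruence_square[OF congruence_right_sandwich])
  qed
qed

lemma comm_subset_rees_cong:
  assumes "\<alpha> \<subseteq> rees_cong T \<or> \<beta> \<subseteq> rees_cong T"
  shows "comm [\<alpha>, \<beta>] \<subseteq> rees_cong T"
  using assms
proof
  assume "\<alpha> \<subseteq> rees_cong T"
  then have "comm [\<alpha>, \<beta>] \<subseteq> rees_cong (spow (m + 1))"
    using comm_subset_rees_cong_spow[OF m_pos order_refl, of \<alpha> \<beta>] T_eq by simp
  also have "\<dots> \<subseteq> rees_cong T"
    unfolding T_eq by (intro rees_cong_mono spow_antimono[OF m_pos]) simp
  finally show ?thesis .
next
  assume "\<beta> \<subseteq> rees_cong T"
  then have "comm [\<alpha>, \<beta>] \<subseteq> rees_cong (spow (1 + m))"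
    using comm_subset_rees_cong_spow[OF order_refl m_pos, of \<alpha> \<beta>] T_eq by simp
  also have "\<dots> \<subseteq> rees_cong T"
    unfolding T_eq by (intro rees_cong_mono spow_antimono[OF m_pos]) simp
  finally show ?thesis .
qed

lemma comm_subset_sandwich_snd:
  assumes "\<beta> \<subseteq> sandwich (Suc k)"
  shows "comm [\<alpha>, \<beta>] \<subseteq> sandwich k"
proof -
  have hyps: "\<beta> \<subseteq> rees_cong T \<inter> left_sandwich (Suc k)" "\<beta> \<subseteq> rees_cong T \<inter> right_sandwich (Suc k)"
    using assms by (auto simp: sandwich_def)
  have "comm [\<alpha>, \<beta>] \<subseteq> rees_cong T"
    using hyps by (intro comm_subset_rees_cong) blast
  moreover have "comm [\<alpha>, \<beta>] \<subseteq> left_sandwich k"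
    by (rule comm_least[OF congruence_left_sandwich term_cond_left_sandwich_snd[OF hyps(1)]])
  moreover have "comm [\<alpha>, \<beta>] \<subseteq> right_sandwich k"
    by (rule comm_least[OF congruence_right_sandwich term_cond_right_sandwich_snd[OF hyps(2)]])
  ultimately show ?thesis
    unfolding sandwich_def by blast
qed

lemma comm_subset_sandwich_fst:
  assumes "\<alpha> \<subseteq> sandwich (Suc k)"
  shows "comm [\<alpha>, \<beta>] \<subseteq> sandwich k"
proof -
  have hyps: "\<alpha> \<subseteq> rees_cong T \<inter> left_sandwich (Suc k)" "\<alpha> \<subseteq> rees_cong T \<inter> right_sandwich (Suc k)"
    using assms by (auto simp: sandwich_def)
  have "comm [\<alpha>, \<beta>] \<subseteq> rees_cong T"
    using hyps by (intro comm_subset_rees_cong) blast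
  moreover have "comm [\<alpha>, \<beta>] \<subseteq> left_sandwich k"
    by (rule comm_least[OF congruence_left_sandwich term_cond_left_sandwich_fst[OF hyps(1)]])
  moreover have "comm [\<alpha>, \<beta>] \<subseteq> right_sandwich k"
    by (rule comm_least[OF congruence_right_sandwich term_cond_right_sandwich_fst[OF hyps(2)]])
  ultimately show ?thesis
    unfolding sandwich_def by blast
qed

lemma comm_eq_Id_if_subset_rees_cong:
  assumes "\<alpha> \<subseteq> rees_cong T" "\<beta> \<subseteq> rees_cong T"
  shows "comm [\<alpha>, \<beta>] = Id"
proof -
  have "comm [\<alpha>, \<beta>] \<subseteq> sandwich 0"
    unfolding sandwich_def
    using assms comm_subset_rees_cong[of \<alpha> \<beta>]
      comm_least[OF congruence_left_sandwich term_cond_left_sandwich_0[OF assms]]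
      comm_least[OF congruence_right_sandwich term_cond_right_sandwich_0[OF assms]]
    by (intro Int_greatest) simp_all
  then show ?thesis
    using sandwich_0 Id_subset_comm by blast
qed

lemma lseries_subset_sandwich: "m \<le> k + i \<Longrightarrow> lseries (m + i) \<subseteq> sandwich k"
proof (induction i arbitrary: k)
  case 0
  then show ?case
    using lseries_subset_rees_cong[OF m_pos] rees_cong_subset_sandwich sandwich_mono T_eq
    by fastforce
next
  case (Suc i)
  then have "lseries (m + i) \<subseteq> sandwich (Suc k)"
    by simp
  then show ?case
    using m_pos by (simp add: lseries_Suc comm_subset_sandwich_snd)
qed

lemma rseries_subset_sandwich: "m \<le> k + i \<Longrightarrow> rseries (m + i) \<subseteq> sandwich k"
proof (induction i arbitrary: k)
  case 0
  then show ?case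
    using rseries_subset_rees_cong[OF m_pos] rees_cong_subset_sandwich sandwich_mono T_eq
    by fastforce
next
  case (Suc i)
  then have "rseries (m + i) \<subseteq> sandwich (Suc k)"
    by simp
  then show ?case
    using m_pos by (simp add: rseries_Suc comm_subset_sandwich_fst)
qed

lemma lseries_eq_Id: "lseries (2 * m + 1) = (Id :: 'a rel)"
proof (rule subset_antisym)
  show "lseries (2 * m + 1) \<subseteq> (Id :: 'a rel)"
    using lseries_subset_sandwich[of 0 "m + 1"] sandwich_0 by (simp add: mult_2 add.assoc)
qed (rule Id_subset_lseries)

lemma rseries_eq_Id: "rseries (2 * m + 1) = (Id :: 'a rel)"
proof (rule subset_antisym)
  show "rseries (2 * m + 1) \<subseteq> (Id :: 'a rel)"
    using rseries_subset_sandwich[of 0 "m + 1"] sandwich_0 by (simp add: mult_2 add.assoc)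
qed (rule Id_subset_rseries)

lemma derived_ceiling_log_subset_rees_cong: "derived (nat \<lceil>log 2 (real m)\<rceil>) \<subseteq> rees_cong T"
  using derived_subset_rees_cong
    rees_cong_mono[OF spow_antimono[OF m_pos le_two_power_ceiling_log[OF m_pos]]]
  unfolding T_eq by blast

lemma derived_eq_Id: "derived (nat \<lceil>log 2 (real m)\<rceil> + 1) = (Id :: 'a rel)"
  using comm_eq_Id_if_subset_rees_cong[OF derived_ceiling_log_subset_rees_cong
      derived_ceiling_log_subset_rees_cong]
  by simp

lemma comm_UNIV_UNIV_eq_Id_if_m_eq_1: "m = 1 \<Longrightarrow> comm [UNIV, UNIV :: 'a rel] = Id"
  using comm_eq_Id_if_subset_rees_cong[of UNIV UNIV] T_eq by simp

lemma sprod_delete_middle: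
  fixes xs :: "'a list"
  assumes "2 * m + 1 \<le> length xs"
  shows "sprod xs = sprod (take m xs @ drop (Suc m) xs)"
proof -
  define A C where "A = take m xs" and "C = drop (Suc m) xs"
  have xs: "xs = A @ xs ! m # C"
    using assms id_take_nth_drop[of m xs] by (simp add: A_def C_def)
  have "A \<noteq> []" "C \<noteq> []" "sprod A \<in> T" "sprod C \<in> T"
    using assms m_pos sprod_mem by (auto simp: A_def C_def)
  then have "sprod xs = sprod A * xs ! m * sprod C"
    by (subst xs) (simp add: sprod_append sprod_Cons mult.assoc)
  also have "\<dots> = sprod A * sprod C"
    using absorb \<open>sprod A \<in> T\<close> \<open>sprod C \<in> T\<close> by blast
  also have "\<dots> = sprod (take m xs @ drop (Suc m) xs)"
    using \<open>A \<noteq> []\<close> \<open>C \<noteq> []\<close> by (simp add: sprod_append A_def C_def)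
  finally show ?thesis .
qed

lemma comm_replicate_eq_Id: "comm (replicate (2 * m + 1) (UNIV :: 'a rel)) = Id"
  using sprod_delete_middle by (intro comm_replicate_UNIV_eq_Id_if_sprod_delete) auto

end

theorem lemma3p2:
  fixes m :: nat
  assumes "m \<ge> 1"
    and "rect_band (spow m :: 'a::semigroup_mult set)"
  shows "(m = 1 \<longrightarrow> abelian TYPE('a))
    \<and> solvable TYPE('a) (nat \<lceil>log 2 (real m)\<rceil> + 1)
    \<and> ((\<exists>a. spow m = {a :: 'a}) \<longrightarrow> solvable TYPE('a) (nat \<lceil>log 2 (real m)\<rceil>))
    \<and> left_nilpotent TYPE('a) (2 * m) \<and> right_nilpotent TYPE('a) (2 * m)
    \<and> supernilpotent TYPE('a) (2 * m)
    \<and> ((\<exists>a. spow m = {a :: 'a}) \<longrightarrow>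
         left_nilpotent TYPE('a) m \<and> right_nilpotent TYPE('a) m \<and> supernilpotent TYPE('a) m)"
proof -
  interpret rect_band_power m "spow m :: 'a set"
    using assms by unfold_locales auto
  have singleton: "derived (nat \<lceil>log 2 (real m)\<rceil>) = (Id :: 'a rel)
      \<and> lseries (m + 1) = (Id :: 'a rel) \<and> rseries (m + 1) = (Id :: 'a rel)
      \<and> comm (replicate (m + 1) (UNIV :: 'a rel)) = Id"
    if "spow m = {a :: 'a}" for a
    using derived_eq_Id_if_spow_singleton[OF assms(1) that le_two_power_ceiling_log[OF assms(1)]]
      lseries_eq_Id_if_spow_singleton[OF assms(1) that]
      rseries_eq_Id_if_spow_singleton[OF assms(1) that]
      comm_replicate_eq_Id_if_spow_singleton[OF assms(1) that]
    by blast
  show ?thesis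
    unfolding abelian_def solvable_def left_nilpotent_def right_nilpotent_def supernilpotent_def
    using comm_UNIV_UNIV_eq_Id_if_m_eq_1 derived_eq_Id lseries_eq_Id rseries_eq_Id
      comm_replicate_eq_Id
    by (auto dest: singleton)
qed

end
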